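(* Let $\Gamma$ be a finite, compact, connected, bipartite metric graph with first Betti number $\beta$, and let $B\subset\partial\Gamma$ be nonempty. Then $$\lambda_{k+\beta+|B|-1}\big(L^{\rm a/st,N}(\Gamma,B)\big)=\lambda_k\big(L^{\rm st,D}(\Gamma,B)\big)\qquad\text{for all }k\in\mathbb N.$$
   Context: A finite compact metric graph $\Gamma$ consists of finitely many edges $e_n=[x_{2n-1},x_{2n}]\subset\mathbb R$, $n=1,\dots,E$, of positive lengths and a vertex set $\mathcal V=\{v_1,\dots,v_V\}$ which is a partition of the set of all edge endpoints; the degree of a vertex is the number of endpoints it contains (loops count twice); $\partial\Gamma$ is the set of vertices of degree one; $\beta=E-V+1$. $\Gamma$ is bipartite if $\mathcal V=\mathcal V_1\sqcup\mathcal V_2$ with every edge having one endpoint in a vertex of $\mathcal V_1$ and the other in a vertex of $\mathcal V_2$. $f(x_j)$ denotes the limit of $f$ at endpoint $x_j$, and $\partial f(x_j)=f'(x_j)$ if $x_j$ is a left endpoint, $-f'(x_j)$ if a right endpoint. $L^{\rm st,D}(\Gamma,B)$ acts as $-f''$ on each edge with domain all $f\in W^2_2(\Gamma\setminus\mathcal V)=\bigoplus_nW^2_2(e_n)$ satisfying $f=0$ at each vertex of $B$ and standard conditions ($f(x_i)=f(x_j)$ for $x_i,x_j\in v$, $\sum_{x_j\in v}\partial f(x_j)=0$) at all other vertices $v$. $L^{\rm a/st,N}(\Gamma,B)$ acts as $-f''$ with domain all $f\in W^2_2(\Gamma\setminus\mathcal V)$ satisfying $\partial f=0$ at each vertex of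 $B$ and anti-standard conditions ($\sum_{x_j\in v}f(x_j)=0$, $\partial f(x_i)=\partial f(x_j)$ for $x_i,x_j\in v$) at all other vertices $v$. Eigenvalues $\lambda_1\le\lambda_2\le\dots$ are counted with multiplicities. *)

theory Defs
  imports "HOL-Analysis.Analysis"
begin

text \<open>
  Edge n (0-based, n < E) is the
  interval [x (2n), x (2n+1)]; its left endpoint has index 2n and its right
  endpoint index 2n+1.  The vertex set Vs is a partition of the endpoint
  index set {..< 2E}.
\<close>

definition metric_graph :: "nat \<Rightarrow> (nat \<Rightarrow> real) \<Rightarrow> nat set set \<Rightarrow> bool" where
  "metric_graph E x Vs \<longleftrightarrow>
     (\<forall>n<E. x (2*n) < x (2*n+1)) \<and>
     (\<forall>v\<in>Vs. v \<noteq> {}) \<and>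
     (\<forall>v\<in>Vs. \<forall>w\<in>Vs. v \<noteq> w \<longrightarrow> v \<inter> w = {}) \<and>
     \<Union>Vs = {..<2*E}"

definition edge_rel :: "nat \<Rightarrow> nat set set \<Rightarrow> (nat set \<times> nat set) set" where
  "edge_rel E Vs = {(v,w). v \<in> Vs \<and> w \<in> Vs \<and>
      (\<exists>n<E. (2*n \<in> v \<and> 2*n+1 \<in> w) \<or> (2*n+1 \<in> v \<and> 2*n \<in> w))}"

definition graph_connected :: "nat \<Rightarrow> nat set set \<Rightarrow> bool" where
  "graph_connected E Vs \<longleftrightarrow> (\<forall>v\<in>Vs. \<forall>w\<in>Vs. (v,w) \<in> (edge_rel E Vs)\<^sup>*)"

definition bipartite :: "nat \<Rightarrow> nat set set \<Rightarrow> bool" where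
  "bipartite E Vs \<longleftrightarrow> (\<exists>V1 \<subseteq> Vs. \<forall>n<E. \<forall>v\<in>Vs. \<forall>w\<in>Vs.
      2*n \<in> v \<longrightarrow> 2*n+1 \<in> w \<longrightarrow> (v \<in> V1 \<longleftrightarrow> w \<notin> V1))"

definition degree :: "nat set \<Rightarrow> nat" where
  "degree v = card v"

definition boundary :: "nat set set \<Rightarrow> nat set set" where
  "boundary Vs = {v \<in> Vs. degree v = 1}"

definition betti :: "nat \<Rightarrow> nat set set \<Rightarrow> int" where
  "betti E Vs = int E - int (card Vs) + 1"

text \<open>Functions on the graph: f n is the function on edge n.\<close>

definition edge :: "(nat \<Rightarrow> real) \<Rightarrow> nat \<Rightarrow> real set" where
  "edge x n = {x (2*n) .. x (2*n+1)}"

definition endval :: "(nat \<Rightarrow> real \<Rightarrow> real) \<Rightarrow> (nat \<Rightarrow> real) \<Rightarrow> nat \<Rightarrow> real" where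
  "endval f x j = f (j div 2) (x j)"

definition endder :: "(nat \<Rightarrow> real \<Rightarrow> real) \<Rightarrow> (nat \<Rightarrow> real) \<Rightarrow> nat \<Rightarrow> real" where
  "endder d x j = (if even j then d (j div 2) (x j) else - d (j div 2) (x j))"

definition solves_edges ::
  "nat \<Rightarrow> (nat \<Rightarrow> real) \<Rightarrow> real \<Rightarrow> (nat \<Rightarrow> real \<Rightarrow> real) \<Rightarrow> (nat \<Rightarrow> real \<Rightarrow> real) \<Rightarrow> bool" where
  "solves_edges E x lam f d \<longleftrightarrow>
     (\<forall>n<E. \<exists>d2. \<forall>t\<in>edge x n.
        (f n has_real_derivative d n t) (at t within edge x n) \<and>
        (d n has_real_derivative d2 t) (at t within edge x n) \<and>
        - d2 t = lam * f n t)"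

definition standard_cond :: "nat set \<Rightarrow> (nat \<Rightarrow> real) \<Rightarrow> (nat \<Rightarrow> real) \<Rightarrow> bool" where
  "standard_cond v fv dv \<longleftrightarrow> (\<forall>i\<in>v. \<forall>j\<in>v. fv i = fv j) \<and> (\<Sum>j\<in>v. dv j) = 0"

definition antistandard_cond :: "nat set \<Rightarrow> (nat \<Rightarrow> real) \<Rightarrow> (nat \<Rightarrow> real) \<Rightarrow> bool" where
  "antistandard_cond v fv dv \<longleftrightarrow> (\<Sum>j\<in>v. fv j) = 0 \<and> (\<forall>i\<in>v. \<forall>j\<in>v. dv i = dv j)"

text \<open>Eigenfunctions (with eigenvalue lam, zero function allowed) of L^{st,D}(Gamma,B).\<close>
definition eigfun_stD ::
  "nat \<Rightarrow> (nat \<Rightarrow> real) \<Rightarrow> nat set set \<Rightarrow> nat set set \<Rightarrow> real \<Rightarrow> (nat \<Rightarrow> real \<Rightarrow> real) \<Rightarrow> bool" where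
  "eigfun_stD E x Vs B lam f \<longleftrightarrow> (\<exists>d. solves_edges E x lam f d \<and>
      (\<forall>v\<in>B. \<forall>j\<in>v. endval f x j = 0) \<and>
      (\<forall>v\<in>Vs - B. standard_cond v (endval f x) (endder d x)))"

definition eigfun_astN ::
  "nat \<Rightarrow> (nat \<Rightarrow> real) \<Rightarrow> nat set set \<Rightarrow> nat set set \<Rightarrow> real \<Rightarrow> (nat \<Rightarrow> real \<Rightarrow> real) \<Rightarrow> bool" where
  "eigfun_astN E x Vs B lam f \<longleftrightarrow> (\<exists>d. solves_edges E x lam f d \<and>
      (\<forall>v\<in>B. \<forall>j\<in>v. endder d x j = 0) \<and>
      (\<forall>v\<in>Vs - B. antistandard_cond v (endval f x) (endder d x)))"

definition lin_indep :: "nat \<Rightarrow> (nat \<Rightarrow> real) \<Rightarrow> nat \<Rightarrow> (nat \<Rightarrow> nat \<Rightarrow> real \<Rightarrow> real) \<Rightarrow> bool" where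
  "lin_indep E x m phi \<longleftrightarrow>
     (\<forall>c. (\<forall>n<E. \<forall>t\<in>edge x n. (\<Sum>i<m. c i * phi i n t) = 0) \<longrightarrow> (\<forall>i<m. c i = 0))"

definition multiplicity ::
  "nat \<Rightarrow> (nat \<Rightarrow> real) \<Rightarrow> (real \<Rightarrow> (nat \<Rightarrow> real \<Rightarrow> real) \<Rightarrow> bool) \<Rightarrow> real \<Rightarrow> nat" where
  "multiplicity E x P lam = Sup {m. \<exists>phi. (\<forall>i<m. P lam (phi i)) \<and> lin_indep E x m phi}"

definition count_eig ::
  "nat \<Rightarrow> (nat \<Rightarrow> real) \<Rightarrow> (real \<Rightarrow> (nat \<Rightarrow> real \<Rightarrow> real) \<Rightarrow> bool) \<Rightarrow> real \<Rightarrow> nat" where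
  "count_eig E x P mu = (\<Sum>lam\<in>{lam. lam \<le> mu \<and> multiplicity E x P lam > 0}. multiplicity E x P lam)"

text \<open>k-th eigenvalue (k \<ge> 1), counted with multiplicities, in nondecreasing order.\<close>
definition eigenvalue ::
  "nat \<Rightarrow> (nat \<Rightarrow> real) \<Rightarrow> (real \<Rightarrow> (nat \<Rightarrow> real \<Rightarrow> real) \<Rightarrow> bool) \<Rightarrow> nat \<Rightarrow> real" where
  "eigenvalue E x P k = (LEAST mu. k \<le> count_eig E x P mu)"

end

theory Submission
  imports Defs "HOL-Library.Function_Algebras"
begin

(*
  On a bipartite graph let the edge sign be +1 on edges whose left endpoint lies in the
  colour class V1 and -1 otherwise.  Multiplying the derivative of a function by the edge
  sign exchanges endpoint values and oriented endpoint derivatives, up to a factor that is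
  constant at each vertex.  Hence it maps \<lambda>-eigenfunctions of L^{st,D} to
  \<lambda>-eigenfunctions of L^{a/st,N} and back, and for \<lambda> \<noteq> 0 it preserves linear
  independence: the nonzero eigenvalues of both operators agree with multiplicities.

  Integration by parts bounds both spectra from below: L^{st,D} has no eigenvalue \<le> 0
  (B is nonempty and the graph connected) and L^{a/st,N} none below 0.  The kernel of
  L^{a/st,N} consists of the edgewise constant functions whose endpoint values sum to zero
  at every vertex outside B.  These V - |B| linear conditions are independent, because every
  vertex is joined to B by a path, so the kernel has dimension E - V + |B| = \<beta> + |B| - 1,
  which is exactly the shift of the index.
*)


lemma sum_apply:
  fixes g :: "'a \<Rightarrow> 'b \<Rightarrow> 'c::comm_monoid_add"
  shows "(\<Sum>y\<in>A. g y) z = (\<Sum>y\<in>A. g y z)"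
  by (induction A rule: infinite_finite_induct) simp_all

lemma sum_lessThan_in_pairs:
  fixes g :: "nat \<Rightarrow> 'a::comm_monoid_add"
  shows "(\<Sum>n<N. g (2*n) + g (2*n+1)) = (\<Sum>j<2*N. g j)"
  by (induction N) (simp_all add: add.assoc)

lemma solves_edges_iff:
  "solves_edges E x lam f d \<longleftrightarrow> (\<forall>n<E. \<forall>t\<in>edge x n.
     (f n has_real_derivative d n t) (at t within edge x n) \<and>
     (d n has_real_derivative - (lam * f n t)) (at t within edge x n))"
proof
  assume "solves_edges E x lam f d"
  then show "\<forall>n<E. \<forall>t\<in>edge x n.
     (f n has_real_derivative d n t) (at t within edge x n) \<and>
     (d n has_real_derivative - (lam * f n t)) (at t within edge x n)"
    unfolding solves_edges_def by (metis minus_minus)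
qed (unfold solves_edges_def, intro allI impI exI[of _ "\<lambda>t. - (lam * f _ t)"], auto)

lemma solves_edges_derivative:
  assumes "solves_edges E x lam f d"
  shows "solves_edges E x lam d (\<lambda>n t. - lam * f n t)"
  unfolding solves_edges_iff
proof (intro allI impI ballI conjI)
  fix n t assume "n < E" "t \<in> edge x n"
  then have f: "(f n has_real_derivative d n t) (at t within edge x n)"
    and d: "(d n has_real_derivative - (lam * f n t)) (at t within edge x n)"
    using assms unfolding solves_edges_iff by auto
  show "(d n has_real_derivative - lam * f n t) (at t within edge x n)" using d by simp
  show "((\<lambda>t. - lam * f n t) has_real_derivative - (lam * d n t)) (at t within edge x n)"
    using DERIV_cmult[OF f, of "- lam"] by simp
qed

lemma solves_edges_edge_scale:
  assumes "solves_edges E x lam f d"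
  shows "solves_edges E x lam (\<lambda>n t. s n * f n t) (\<lambda>n t. s n * d n t)"
  unfolding solves_edges_iff
proof (intro allI impI ballI conjI)
  fix n t assume "n < E" "t \<in> edge x n"
  then have f: "(f n has_real_derivative d n t) (at t within edge x n)"
    and d: "(d n has_real_derivative - (lam * f n t)) (at t within edge x n)"
    using assms unfolding solves_edges_iff by auto
  show "((\<lambda>t. s n * f n t) has_real_derivative s n * d n t) (at t within edge x n)"
    using DERIV_cmult[OF f] .
  show "((\<lambda>t. s n * d n t) has_real_derivative - (lam * (s n * f n t))) (at t within edge x n)"
    using DERIV_cmult[OF d, of "s n"] by (simp add: mult.left_commute)
qed

lemma has_real_derivative_zero_if_vanishing:
  fixes h :: "real \<Rightarrow> real"
  assumes "a < b" "t \<in> {a..b}" "(h has_real_derivative D) (at t within {a..b})"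
    and "\<And>s. s \<in> {a..b} \<Longrightarrow> h s = 0"
  shows "D = 0"
proof -
  have "((\<lambda>_. 0) has_real_derivative D) (at t within {a..b})"
    using has_field_derivative_transform_within[OF assms(3), of 1 "\<lambda>_. 0"] assms(2,4) by auto
  moreover have "((\<lambda>_. 0) has_real_derivative 0) (at t within {a..b})" by simp
  ultimately show ?thesis
    using vector_derivative_unique_within_closed_interval[of a b t "\<lambda>_. 0" D 0] assms(1,2)
    unfolding has_real_derivative_iff_has_vector_derivative cbox_interval by simp
qed

lemma energy_identity:
  fixes f f' :: "real \<Rightarrow> real"
  assumes "a \<le> b"
    and "\<And>t. t \<in> {a..b} \<Longrightarrow> (f has_real_derivative f' t) (at t within {a..b})"
    and "\<And>t. t \<in> {a..b} \<Longrightarrow> (f' has_real_derivative - (lam * f t)) (at t within {a..b})"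
  shows "((\<lambda>t. (f' t)\<^sup>2 - lam * (f t)\<^sup>2) has_integral (f b * f' b - f a * f' a)) {a..b}"
proof (rule fundamental_theorem_of_calculus[OF assms(1)])
  fix t assume "t \<in> {a..b}"
  from DERIV_mult[OF assms(2,3)[OF this]]
  have "((\<lambda>t. f t * f' t) has_real_derivative (f' t)\<^sup>2 - lam * (f t)\<^sup>2) (at t within {a..b})"
    by (rule DERIV_cong) (simp add: power2_eq_square algebra_simps)
  then show "((\<lambda>t. f t * f' t) has_vector_derivative (f' t)\<^sup>2 - lam * (f t)\<^sup>2) (at t within {a..b})"
    by (simp add: has_real_derivative_iff_has_vector_derivative)
qed

definition boundary_term ::
  "nat \<Rightarrow> (nat \<Rightarrow> real) \<Rightarrow> (nat \<Rightarrow> real \<Rightarrow> real) \<Rightarrow> (nat \<Rightarrow> real \<Rightarrow> real) \<Rightarrow> real" where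
  "boundary_term E x f d = (\<Sum>j<2*E. endval f x j * endder d x j)"

lemma standard_cond_product_sum:
  assumes "standard_cond v fv dv"
  shows "(\<Sum>j\<in>v. fv j * dv j) = 0"
proof (cases "v = {}")
  case False
  then obtain i where i: "i \<in> v" by blast
  have "(\<Sum>j\<in>v. fv j * dv j) = (\<Sum>j\<in>v. fv i * dv j)"
  proof (rule sum.cong)
    fix j assume "j \<in> v"
    then have "fv j = fv i" using assms i unfolding standard_cond_def by blast
    then show "fv j * dv j = fv i * dv j" by simp
  qed simp
  also have "\<dots> = fv i * (\<Sum>j\<in>v. dv j)" by (simp add: sum_distrib_left)
  also have "\<dots> = 0" using assms unfolding standard_cond_def by simp
  finally show ?thesis .
qed simp

lemma antistandard_cond_product_sum:
  assumes "antistandard_cond v fv dv"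
  shows "(\<Sum>j\<in>v. fv j * dv j) = 0"
proof (cases "v = {}")
  case False
  then obtain i where i: "i \<in> v" by blast
  have "(\<Sum>j\<in>v. fv j * dv j) = (\<Sum>j\<in>v. fv j * dv i)"
  proof (rule sum.cong)
    fix j assume "j \<in> v"
    then have "dv j = dv i" using assms i unfolding antistandard_cond_def by blast
    then show "fv j * dv j = fv j * dv i" by simp
  qed simp
  also have "\<dots> = (\<Sum>j\<in>v. fv j) * dv i" by (simp add: sum_distrib_right)
  also have "\<dots> = 0" using assms unfolding antistandard_cond_def by simp
  finally show ?thesis .
qed simp

lemma standard_cond_cong:
  assumes "\<And>j. j \<in> v \<Longrightarrow> fv j = fv' j" "\<And>j. j \<in> v \<Longrightarrow> dv j = dv' j"
  shows "standard_cond v fv dv \<longleftrightarrow> standard_cond v fv' dv'"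
proof -
  have "sum dv v = sum dv' v" using assms(2) by (rule sum.cong[OF refl])
  moreover have "(\<forall>i\<in>v. \<forall>j\<in>v. fv i = fv j) \<longleftrightarrow> (\<forall>i\<in>v. \<forall>j\<in>v. fv' i = fv' j)"
    using assms(1) by (intro ball_cong refl) simp
  ultimately show ?thesis unfolding standard_cond_def by (simp only:)
qed

lemma antistandard_cond_cong:
  assumes "\<And>j. j \<in> v \<Longrightarrow> fv j = fv' j" "\<And>j. j \<in> v \<Longrightarrow> dv j = dv' j"
  shows "antistandard_cond v fv dv \<longleftrightarrow> antistandard_cond v fv' dv'"
proof -
  have "sum fv v = sum fv' v" using assms(1) by (rule sum.cong[OF refl])
  moreover have "(\<forall>i\<in>v. \<forall>j\<in>v. dv i = dv j) \<longleftrightarrow> (\<forall>i\<in>v. \<forall>j\<in>v. dv' i = dv' j)"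
    using assms(2) by (intro ball_cong refl) simp
  ultimately show ?thesis unfolding antistandard_cond_def by (simp only:)
qed

lemma antistandard_cond_of_standard:
  assumes "standard_cond v fv dv"
  shows "antistandard_cond v (\<lambda>j. a * dv j) (\<lambda>j. b * fv j)"
  unfolding antistandard_cond_def
proof
  have "sum dv v = 0" using assms unfolding standard_cond_def by (rule conjunct2)
  then show "(\<Sum>j\<in>v. a * dv j) = 0" by (simp add: sum_distrib_left[symmetric])
  show "\<forall>i\<in>v. \<forall>j\<in>v. b * fv i = b * fv j"
  proof (intro ballI)
    fix i j assume "i \<in> v" "j \<in> v"
    then have "fv i = fv j" using assms unfolding standard_cond_def by blast
    then show "b * fv i = b * fv j" by (rule arg_cong)
  qed
qed

lemma standard_cond_of_antistandard:
  assumes "antistandard_cond v fv dv"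
  shows "standard_cond v (\<lambda>j. a * dv j) (\<lambda>j. b * fv j)"
  unfolding standard_cond_def
proof
  show "\<forall>i\<in>v. \<forall>j\<in>v. a * dv i = a * dv j"
  proof (intro ballI)
    fix i j assume "i \<in> v" "j \<in> v"
    then have "dv i = dv j" using assms unfolding antistandard_cond_def by blast
    then show "a * dv i = a * dv j" by (rule arg_cong)
  qed
  have "sum fv v = 0" using assms unfolding antistandard_cond_def by (rule conjunct1)
  then show "(\<Sum>j\<in>v. b * fv j) = 0" by (simp add: sum_distrib_left[symmetric])
qed

section \<open>Counting eigenvalues\<close>

lemma multiplicity_eq_0I:
  assumes "\<And>f n t. P lam f \<Longrightarrow> n < E \<Longrightarrow> t \<in> edge x n \<Longrightarrow> f n t = 0"
  shows "multiplicity E x P lam = 0"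
proof -
  have "m = 0" if P: "\<forall>i<m. P lam (phi i)" and li: "lin_indep E x m phi" for m phi
  proof (rule ccontr)
    assume "m \<noteq> 0"
    have "phi i n t = 0" if "i < m" "n < E" "t \<in> edge x n" for i n t
      using assms P that by blast
    then have "(\<Sum>i<m. 1 * phi i n t) = 0" if "n < E" "t \<in> edge x n" for n t
      using that by simp
    from li[unfolded lin_indep_def, rule_format, of "\<lambda>_. 1" 0, OF this] \<open>m \<noteq> 0\<close>
    show False by simp
  qed
  moreover have "lin_indep E x 0 phi" for phi unfolding lin_indep_def by simp
  ultimately have "{m. \<exists>phi. (\<forall>i<m. P lam (phi i)) \<and> lin_indep E x m phi} = {0}" by blast
  then show ?thesis unfolding multiplicity_def by simp
qed

lemma multiplicity_eqI:
  assumes "\<And>m phi. \<forall>i<m. P lam (phi i) \<Longrightarrow> lin_indep E x m phi \<Longrightarrow>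
             \<exists>psi. (\<forall>i<m. Q lam (psi i)) \<and> lin_indep E x m psi"
    and "\<And>m psi. \<forall>i<m. Q lam (psi i) \<Longrightarrow> lin_indep E x m psi \<Longrightarrow>
             \<exists>phi. (\<forall>i<m. P lam (phi i)) \<and> lin_indep E x m phi"
  shows "multiplicity E x P lam = multiplicity E x Q lam"
proof -
  have "{m. \<exists>phi. (\<forall>i<m. P lam (phi i)) \<and> lin_indep E x m phi}
      = {m. \<exists>psi. (\<forall>i<m. Q lam (psi i)) \<and> lin_indep E x m psi}"
    using assms by (intro Collect_cong iffI) (elim exE conjE; simp)+
  then show ?thesis unfolding multiplicity_def by simp
qed

lemma count_eig_shift:
  assumes eq: "\<And>lam. lam \<noteq> 0 \<Longrightarrow> multiplicity E x P lam = multiplicity E x Q lam"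
    and Q_pos: "\<And>lam. lam \<le> 0 \<Longrightarrow> multiplicity E x Q lam = 0"
    and P_nonneg: "\<And>lam. lam < 0 \<Longrightarrow> multiplicity E x P lam = 0"
    and fin: "finite {lam. lam \<le> mu \<and> 0 < multiplicity E x Q lam}"
  shows "count_eig E x P mu = (if 0 \<le> mu then multiplicity E x P 0 else 0) + count_eig E x Q mu"
proof -
  define D where "D = multiplicity E x P 0"
  let ?SQ = "{lam. lam \<le> mu \<and> 0 < multiplicity E x Q lam}"
  have "0 \<notin> ?SQ" using Q_pos by simp
  let ?SP = "{lam. lam \<le> mu \<and> 0 < multiplicity E x P lam}"
  have support: "?SP = ?SQ \<union> (if 0 \<le> mu \<and> 0 < D then {0} else {})"
  proof (intro set_eqI)
    fix lam
    show "lam \<in> ?SP \<longleftrightarrow> lam \<in> ?SQ \<union> (if 0 \<le> mu \<and> 0 < D then {0} else {})"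
      using eq[of lam] P_nonneg[of lam] Q_pos[of lam] unfolding D_def
      by (cases "lam = 0") (auto split: if_splits)
  qed
  have "lam \<noteq> 0" if "lam \<in> ?SQ" for lam using that \<open>0 \<notin> ?SQ\<close> by blast
  then have "(\<Sum>lam\<in>?SQ. multiplicity E x P lam) = count_eig E x Q mu"
    unfolding count_eig_def using eq by (intro sum.cong) auto
  then show ?thesis
    unfolding count_eig_def[of E x P] support D_def[symmetric]
    using fin \<open>0 \<notin> ?SQ\<close> by (cases "0 \<le> mu \<and> 0 < D") (auto simp: D_def)
qed

lemma eigenvalue_shift:
  assumes eq: "\<And>lam. lam \<noteq> 0 \<Longrightarrow> multiplicity E x P lam = multiplicity E x Q lam"
    and Q_pos: "\<And>lam. lam \<le> 0 \<Longrightarrow> multiplicity E x Q lam = 0"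
    and P_nonneg: "\<And>lam. lam < 0 \<Longrightarrow> multiplicity E x P lam = 0"
    and k: "1 \<le> k"
  shows "eigenvalue E x P (k + multiplicity E x P 0) = eigenvalue E x Q k"
proof -
  define D where "D = multiplicity E x P 0"
  have "k + D \<le> count_eig E x P mu \<longleftrightarrow> k \<le> count_eig E x Q mu" for mu
  proof (cases "finite {lam. lam \<le> mu \<and> 0 < multiplicity E x Q lam}")
    case True
    have "mu < 0 \<Longrightarrow> count_eig E x Q mu = 0"
      unfolding count_eig_def using Q_pos by (intro sum.neutral) auto
    then show ?thesis
      using count_eig_shift[OF eq Q_pos P_nonneg True] k unfolding D_def by auto
  next
    case False
    \<comment> \<open>sums over infinite sets are 0, so both counting functions vanish at \<open>mu\<close>\<close>
    have "0 < multiplicity E x P lam" if "0 < multiplicity E x Q lam" for lam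
    proof -
      have "lam \<noteq> 0" using that Q_pos[of 0] by auto
      then show ?thesis using that eq by simp
    qed
    then have "{lam. lam \<le> mu \<and> 0 < multiplicity E x Q lam}
        \<subseteq> {lam. lam \<le> mu \<and> 0 < multiplicity E x P lam}"
      by blast
    then have "infinite {lam. lam \<le> mu \<and> 0 < multiplicity E x P lam}"
      using False finite_subset by blast
    then show ?thesis using False k unfolding count_eig_def by simp
  qed
  then show ?thesis unfolding eigenvalue_def D_def by simp
qed

section \<open>Energy and the nonpositive spectrum\<close>

locale compact_metric_graph =
  fixes E :: nat and x :: "nat \<Rightarrow> real" and Vs :: "nat set set"
  assumes metric_graph: "metric_graph E x Vs"
begin

lemma edge_nondegenerate: "n < E \<Longrightarrow> x (2*n) < x (2*n+1)"
  using metric_graph by (simp add: metric_graph_def)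

lemma Union_vertices: "\<Union>Vs = {..<2*E}"
  using metric_graph by (simp add: metric_graph_def)

lemma vertices_disjoint: "v \<in> Vs \<Longrightarrow> w \<in> Vs \<Longrightarrow> v \<noteq> w \<Longrightarrow> v \<inter> w = {}"
  using metric_graph by (simp add: metric_graph_def)

lemma vertex_eqI: "v \<in> Vs \<Longrightarrow> w \<in> Vs \<Longrightarrow> j \<in> v \<Longrightarrow> j \<in> w \<Longrightarrow> v = w"
  using vertices_disjoint by blast

lemma finite_vertices: "finite Vs"
  using finite_UnionD[of Vs] by (simp add: Union_vertices)

lemma finite_vertex: "v \<in> Vs \<Longrightarrow> finite v"
  using finite_subset[OF Union_upper, of v Vs] by (simp add: Union_vertices)

lemma endpoint_less: "v \<in> Vs \<Longrightarrow> j \<in> v \<Longrightarrow> j < 2*E"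
  using UnionI[of v Vs j] by (simp add: Union_vertices)

lemma endpoint_vertex: "j < 2*E \<Longrightarrow> \<exists>v\<in>Vs. j \<in> v"
  using Union_vertices by blast

lemma endpoint_in_edge:
  assumes "j < 2*E"
  shows "x j \<in> edge x (j div 2)"
proof -
  define n where "n = j div 2"
  have "j = 2*n \<or> j = 2*n+1" unfolding n_def by presburger
  moreover have "x (2*n) < x (2*n+1)" using assms by (intro edge_nondegenerate) (simp add: n_def)
  ultimately show ?thesis unfolding edge_def n_def[symmetric] by (elim disjE) simp_all
qed

lemma sum_endpoints_by_vertex: "(\<Sum>j<2*E. g j) = (\<Sum>v\<in>Vs. \<Sum>j\<in>v. g j)"
proof -
  have "sum g (\<Union>Vs) = (sum \<circ> sum) g Vs"
  proof (rule sum.Union_disjoint)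
    show "\<forall>A\<in>Vs. finite A" using finite_vertex by blast
    show "\<forall>A\<in>Vs. \<forall>B\<in>Vs. A \<noteq> B \<longrightarrow> A \<inter> B = {}" using vertices_disjoint by blast
  qed
  then show ?thesis by (simp add: Union_vertices)
qed

lemma boundary_term_eq_0_if_stD:
  assumes "\<forall>v\<in>B. \<forall>j\<in>v. endval f x j = 0"
    and "\<forall>v\<in>Vs - B. standard_cond v (endval f x) (endder d x)"
  shows "boundary_term E x f d = 0"
proof -
  have "(\<Sum>j\<in>v. endval f x j * endder d x j) = 0" if "v \<in> Vs" for v
    using assms that standard_cond_product_sum by (cases "v \<in> B") auto
  then show ?thesis
    unfolding boundary_term_def sum_endpoints_by_vertex by simp
qed

lemma boundary_term_eq_0_if_astN:
  assumes "\<forall>v\<in>B. \<forall>j\<in>v. endder d x j = 0"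
    and "\<forall>v\<in>Vs - B. antistandard_cond v (endval f x) (endder d x)"
  shows "boundary_term E x f d = 0"
proof -
  have "(\<Sum>j\<in>v. endval f x j * endder d x j) = 0" if "v \<in> Vs" for v
    using assms that antistandard_cond_product_sum by (cases "v \<in> B") auto
  then show ?thesis
    unfolding boundary_term_def sum_endpoints_by_vertex by simp
qed

lemma solves_edges_energy:
  assumes "solves_edges E x lam f d" "n < E"
  shows "((\<lambda>t. (d n t)\<^sup>2 - lam * (f n t)\<^sup>2) has_integral
           (f n (x (2*n+1)) * d n (x (2*n+1)) - f n (x (2*n)) * d n (x (2*n)))) (edge x n)"
  using assms edge_nondegenerate[of n] unfolding solves_edges_iff edge_def
  by (intro energy_identity) auto

lemma sum_edge_energies:
  "(\<Sum>n<E. f n (x (2*n+1)) * d n (x (2*n+1)) - f n (x (2*n)) * d n (x (2*n)))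
     = - boundary_term E x f d"
proof -
  have "(\<Sum>n<E. f n (x (2*n+1)) * d n (x (2*n+1)) - f n (x (2*n)) * d n (x (2*n)))
      = - (\<Sum>n<E. endval f x (2*n) * endder d x (2*n) + endval f x (2*n+1) * endder d x (2*n+1))"
    unfolding endval_def endder_def sum_negf[symmetric] by (intro sum.cong) auto
  then show ?thesis unfolding boundary_term_def sum_lessThan_in_pairs[symmetric] .
qed

lemma boundary_term_eq_0_imp_vanishing:
  assumes se: "solves_edges E x lam f d" and bt: "boundary_term E x f d = 0"
    and lam: "lam \<le> 0" and n: "n < E" and t: "t \<in> edge x n"
  shows "d n t = 0" and "lam < 0 \<Longrightarrow> f n t = 0"
proof -
  define g where "g m s = (d m s)\<^sup>2 - lam * (f m s)\<^sup>2" for m s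
  define I where "I m = f m (x (2*m+1)) * d m (x (2*m+1)) - f m (x (2*m)) * d m (x (2*m))" for m
  have lam_term: "lam * (f m s)\<^sup>2 \<le> 0" for m s
    using lam by (simp add: mult_nonpos_nonneg)
  have g_nonneg: "0 \<le> g m s" for m s
    unfolding g_def using lam_term[of m s] zero_le_power2[of "d m s"] by linarith
  have int: "(g m has_integral I m) (edge x m)" if "m < E" for m
    unfolding g_def I_def using solves_edges_energy[OF se that] .
  have "I m \<ge> 0" if "m < E" for m
    using has_integral_nonneg[OF int[OF that]] g_nonneg by blast
  moreover have "(\<Sum>m<E. I m) = 0"
    unfolding I_def sum_edge_energies bt by simp
  ultimately have "I n = 0" using n sum_nonneg_eq_0_iff[of "{..<E}" I] by auto
  moreover have "continuous_on (edge x n) (g n)"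
  proof -
    have "continuous_on (edge x n) (f n)" "continuous_on (edge x n) (d n)"
      using se n unfolding solves_edges_iff by (auto intro!: DERIV_continuous_on)
    then show ?thesis unfolding g_def by (intro continuous_intros)
  qed
  ultimately have "g n t = 0"
    using has_integral_0_cbox_imp_0[of "x (2*n)" "x (2*n+1)" "g n" t] int[OF n] g_nonneg t
      edge_nondegenerate[OF n]
    unfolding edge_def cbox_interval box_real by fastforce
  then have "(d n t)\<^sup>2 = 0" "lam * (f n t)\<^sup>2 = 0"
    unfolding g_def using lam_term[of n t] zero_le_power2[of "d n t"] by linarith+
  then show "d n t = 0" "lam < 0 \<Longrightarrow> f n t = 0" by auto
qed

lemma constant_on_edge_if_derivative_vanishes:
  assumes "solves_edges E x lam f d" "n < E" "\<forall>t\<in>edge x n. d n t = 0" "t \<in> edge x n"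
  shows "f n t = f n (x (2*n))"
proof -
  have "\<exists>c. \<forall>s\<in>edge x n. f n s = c"
  proof (rule has_field_derivative_zero_constant)
    show "convex (edge x n)" unfolding edge_def by (rule convex_real_interval)
    show "(f n has_field_derivative 0) (at s within edge x n)" if "s \<in> edge x n" for s
      using assms that unfolding solves_edges_iff by force
  qed
  then obtain c where "\<forall>s\<in>edge x n. f n s = c" by blast
  moreover have "x (2*n) \<in> edge x n"
    using edge_nondegenerate[OF assms(2)] unfolding edge_def by simp
  ultimately show ?thesis using assms(4) by simp
qed

lemma endpoint_function_vanishes:
  assumes conn: "graph_connected E Vs" and BV: "B \<subseteq> Vs" and "B \<noteq> {}"
    and across_edges: "\<And>n. n < E \<Longrightarrow> g (2*n+1) = g (2*n)"
    and on_B: "\<forall>v\<in>B. \<forall>j\<in>v. g j = 0"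
    and at_vertices: "\<And>v i j. v \<in> Vs - B \<Longrightarrow> i \<in> v \<Longrightarrow> j \<in> v \<Longrightarrow> g i = g j"
    and j: "j < 2*E"
  shows "g j = 0"
proof -
  obtain b where b: "b \<in> B" using \<open>B \<noteq> {}\<close> by blast
  have "\<forall>j\<in>v. g j = 0" if "v \<in> Vs" for v
  proof -
    have "(b, v) \<in> (edge_rel E Vs)\<^sup>*"
      using conn b BV that unfolding graph_connected_def by blast
    then show ?thesis
    proof (induction rule: rtrancl_induct)
      case base
      show ?case using on_B b by blast
    next
      case (step w z)
      then obtain n where n: "n < E" and z: "z \<in> Vs"
        and e: "(2*n \<in> w \<and> 2*n+1 \<in> z) \<or> (2*n+1 \<in> w \<and> 2*n \<in> z)"
        unfolding edge_rel_def by blast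
      have "g (2*n) = 0 \<and> g (2*n+1) = 0"
        using e step.IH across_edges[OF n] by auto
      then obtain i where i: "i \<in> z" "g i = 0" using e by blast
      show ?case
      proof (cases "z \<in> B")
        case True
        then show ?thesis using on_B by blast
      next
        case False
        then have "g j = g i" if "j \<in> z" for j
          using at_vertices[of z j i] z i(1) that by blast
        then show ?thesis using i(2) by simp
      qed
    qed
  qed
  then show ?thesis using endpoint_vertex[OF j] by blast
qed

lemma stD_eigfun_nonpos_vanishes:
  assumes conn: "graph_connected E Vs" and BV: "B \<subseteq> Vs" and "B \<noteq> {}"
    and ef: "eigfun_stD E x Vs B lam f" and lam: "lam \<le> 0" and n: "n < E" and t: "t \<in> edge x n"
  shows "f n t = 0"
proof -
  obtain d where se: "solves_edges E x lam f d" and on_B: "\<forall>v\<in>B. \<forall>j\<in>v. endval f x j = 0"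
    and st: "\<forall>v\<in>Vs - B. standard_cond v (endval f x) (endder d x)"
    using ef unfolding eigfun_stD_def by blast
  have bt: "boundary_term E x f d = 0" by (rule boundary_term_eq_0_if_stD[OF on_B st])
  show ?thesis
  proof (cases "lam < 0")
    case True
    then show ?thesis using boundary_term_eq_0_imp_vanishing(2)[OF se bt lam n t] by blast
  next
    case False
    have const: "f m s = endval f x (2*m)" if "m < E" "s \<in> edge x m" for m s
      using constant_on_edge_if_derivative_vanishes[OF se that(1) _ that(2)]
        boundary_term_eq_0_imp_vanishing(1)[OF se bt lam that(1)] unfolding endval_def by simp
    have "endval f x (2*n) = 0"
    proof (rule endpoint_function_vanishes[OF conn BV \<open>B \<noteq> {}\<close> _ on_B])
      show "endval f x (2*m+1) = endval f x (2*m)" if "m < E" for m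
        using const[OF that, of "x (2*m+1)"] endpoint_in_edge[of "2*m+1"] that
        unfolding endval_def by simp
      show "endval f x i = endval f x j" if "v \<in> Vs - B" "i \<in> v" "j \<in> v" for v i j
        using st that unfolding standard_cond_def by blast
    qed (use n in simp)
    then show ?thesis using const[OF n t] by simp
  qed
qed

lemma astN_eigfun_neg_vanishes:
  assumes "eigfun_astN E x Vs B lam f" "lam < 0" "n < E" "t \<in> edge x n"
  shows "f n t = 0"
proof -
  obtain d where se: "solves_edges E x lam f d" and on_B: "\<forall>v\<in>B. \<forall>j\<in>v. endder d x j = 0"
    and ast: "\<forall>v\<in>Vs - B. antistandard_cond v (endval f x) (endder d x)"
    using assms(1) unfolding eigfun_astN_def by blast
  have "boundary_term E x f d = 0" by (rule boundary_term_eq_0_if_astN[OF on_B ast])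
  then show ?thesis using boundary_term_eq_0_imp_vanishing(2)[OF se _ _ assms(3,4)] assms(2) by simp
qed

lemma lin_indep_scaled_derivatives:
  assumes se: "\<forall>i<m. solves_edges E x lam (phi i) (d i)" and lam: "lam \<noteq> 0"
    and s: "\<And>n. n < E \<Longrightarrow> s n \<noteq> 0" and li: "lin_indep E x m phi"
  shows "lin_indep E x m (\<lambda>i n t. s n * d i n t)"
  unfolding lin_indep_def
proof (rule allI, rule impI)
  fix c assume H: "\<forall>n<E. \<forall>t\<in>edge x n. (\<Sum>i<m. c i * (s n * d i n t)) = 0"
  \<comment> \<open>a combination of the d i vanishing on an edge has derivative -lam times the same
      combination of the phi i\<close>
  have "(\<Sum>i<m. c i * phi i n t) = 0" if n: "n < E" and t: "t \<in> edge x n" for n t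
  proof -
    have der: "((\<lambda>t. \<Sum>i<m. c i * d i n t) has_real_derivative (\<Sum>i<m. c i * - (lam * phi i n t)))
            (at t within {x (2*n)..x (2*n+1)})"
      using se n t unfolding solves_edges_iff edge_def by (intro DERIV_sum DERIV_cmult) auto
    have van: "(\<Sum>i<m. c i * d i n t') = 0" if "t' \<in> {x (2*n)..x (2*n+1)}" for t'
    proof -
      have "(\<Sum>i<m. c i * (s n * d i n t')) = 0" using H n that unfolding edge_def by blast
      then have "s n * (\<Sum>i<m. c i * d i n t') = 0"
        by (simp add: sum_distrib_left mult.left_commute)
      then show ?thesis using s[OF n] by simp
    qed
    have "(\<Sum>i<m. c i * - (lam * phi i n t)) = 0"
      using t unfolding edge_def
      by (rule has_real_derivative_zero_if_vanishing[OF edge_nondegenerate[OF n] _ der van])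
    then have "lam * (\<Sum>i<m. c i * phi i n t) = 0"
      by (simp add: sum_distrib_left sum_negf mult.left_commute)
    then show ?thesis using lam by simp
  qed
  then show "\<forall>i<m. c i = 0" using li unfolding lin_indep_def by blast
qed

lemma eigenfamily_transfer:
  assumes lam: "lam \<noteq> 0" and s: "\<And>n. n < E \<Longrightarrow> s n \<noteq> 0"
    and transfer: "\<And>f. P lam f \<Longrightarrow> \<exists>d. solves_edges E x lam f d \<and> Q lam (\<lambda>n t. s n * d n t)"
    and P: "\<forall>i<m. P lam (phi i)" and li: "lin_indep E x m phi"
  shows "\<exists>psi. (\<forall>i<m. Q lam (psi i)) \<and> lin_indep E x m psi"
proof -
  have "\<forall>i\<in>{..<m}. \<exists>d. solves_edges E x lam (phi i) d \<and> Q lam (\<lambda>n t. s n * d n t)"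
    using P transfer by simp
  from bchoice[OF this] obtain d
    where d: "\<forall>i\<in>{..<m}. solves_edges E x lam (phi i) (d i) \<and> Q lam (\<lambda>n t. s n * d i n t)"
    by blast
  then have "lin_indep E x m (\<lambda>i n t. s n * d i n t)"
    by (intro lin_indep_scaled_derivatives[OF _ lam s li]) simp
  then show ?thesis
    using d by (intro exI[of _ "\<lambda>i n t. s n * d i n t"]) simp
qed

end

section \<open>The sign twist on bipartite graphs\<close>

definition endpoint_sign :: "nat set set \<Rightarrow> nat \<Rightarrow> real" where
  "endpoint_sign V1 j = (if \<exists>v\<in>V1. j \<in> v then 1 else -1)"

definition edge_sign :: "nat set set \<Rightarrow> nat \<Rightarrow> real" where
  "edge_sign V1 n = endpoint_sign V1 (2*n)"

locale bipartite_metric_graph = compact_metric_graph +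
  fixes V1 :: "nat set set"
  assumes V1_subset: "V1 \<subseteq> Vs"
    and edge_joins_classes:
      "\<And>n v w. n < E \<Longrightarrow> v \<in> Vs \<Longrightarrow> w \<in> Vs \<Longrightarrow> 2*n \<in> v \<Longrightarrow> 2*n+1 \<in> w \<Longrightarrow>
        v \<in> V1 \<longleftrightarrow> w \<notin> V1"
begin

lemma endpoint_sign_at_vertex:
  assumes "v \<in> Vs" "j \<in> v"
  shows "endpoint_sign V1 j = (if v \<in> V1 then 1 else -1)"
proof (cases "v \<in> V1")
  case True
  then show ?thesis using assms(2) unfolding endpoint_sign_def by auto
next
  case False
  have "\<not> (\<exists>w\<in>V1. j \<in> w)"
    using False V1_subset vertex_eqI[OF _ assms(1) _ assms(2)] by blast
  then show ?thesis using False unfolding endpoint_sign_def by simp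
qed

lemma edge_sign_nonzero: "edge_sign V1 n \<noteq> 0"
  unfolding edge_sign_def endpoint_sign_def by simp

lemma endpoint_sign_oriented:
  assumes "j < 2*E"
  shows "endpoint_sign V1 j = (if even j then edge_sign V1 (j div 2) else - edge_sign V1 (j div 2))"
proof -
  define n where "n = j div 2"
  have n: "n < E" using assms unfolding n_def by simp
  obtain v w where v: "v \<in> Vs" "2*n \<in> v" and w: "w \<in> Vs" "2*n+1 \<in> w"
    using endpoint_vertex[of "2*n"] endpoint_vertex[of "2*n+1"] n by auto
  have "endpoint_sign V1 (2*n+1) = - endpoint_sign V1 (2*n)"
    using endpoint_sign_at_vertex[OF v] endpoint_sign_at_vertex[OF w]
      edge_joins_classes[OF n v(1) w(1) v(2) w(2)] by auto
  moreover have "j = 2*n \<or> j = 2*n+1" unfolding n_def by presburger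
  ultimately show ?thesis unfolding edge_sign_def n_def[symmetric] by auto
qed

lemma sign_twist_at_vertex:
  assumes "v \<in> Vs" "j \<in> v"
  shows endval_sign_twist:
      "endval (\<lambda>n t. edge_sign V1 n * h n t) x j = (if v \<in> V1 then 1 else -1) * endder h x j"
    and endder_sign_twist:
      "endder (\<lambda>n t. edge_sign V1 n * h n t) x j = (if v \<in> V1 then 1 else -1) * endval h x j"
  using endpoint_sign_oriented[OF endpoint_less[OF assms]] endpoint_sign_at_vertex[OF assms]
  unfolding endval_def endder_def by (cases "even j"; simp)+

lemma stD_sign_twist:
  assumes BV: "B \<subseteq> Vs" and ef: "eigfun_stD E x Vs B lam f"
  shows "\<exists>d. solves_edges E x lam f d \<and> eigfun_astN E x Vs B lam (\<lambda>n t. edge_sign V1 n * d n t)"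
proof -
  obtain d where se: "solves_edges E x lam f d" and on_B: "\<forall>v\<in>B. \<forall>j\<in>v. endval f x j = 0"
    and st: "\<forall>v\<in>Vs - B. standard_cond v (endval f x) (endder d x)"
    using ef unfolding eigfun_stD_def by blast
  let ?F = "\<lambda>n t. edge_sign V1 n * d n t"
  let ?D = "\<lambda>n t. edge_sign V1 n * (- lam * f n t)"
  have der: "endder ?D x j = ((if v \<in> V1 then 1 else -1) * - lam) * endval f x j"
    if "v \<in> Vs" "j \<in> v" for v j
    using endder_sign_twist[OF that, of "\<lambda>n t. - lam * f n t"] unfolding endval_def by simp
  have "eigfun_astN E x Vs B lam ?F"
    unfolding eigfun_astN_def
  proof (intro exI[of _ ?D] conjI ballI)
    show "solves_edges E x lam ?F ?D"
      by (rule solves_edges_edge_scale[OF solves_edges_derivative[OF se]])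
    fix v j assume "v \<in> B" "j \<in> v"
    then show "endder ?D x j = 0" using der[of v j] on_B BV by auto
  next
    fix v assume v: "v \<in> Vs - B"
    then have "antistandard_cond v (\<lambda>j. (if v \<in> V1 then 1 else -1) * endder d x j)
        (\<lambda>j. ((if v \<in> V1 then 1 else -1) * - lam) * endval f x j)"
      using st by (intro antistandard_cond_of_standard) blast
    then show "antistandard_cond v (endval ?F x) (endder ?D x)"
      using v endval_sign_twist der by (subst antistandard_cond_cong[of v]) auto
  qed
  with se show ?thesis by (intro exI[of _ d] conjI)
qed

lemma astN_sign_twist:
  assumes BV: "B \<subseteq> Vs" and ef: "eigfun_astN E x Vs B lam g"
  shows "\<exists>e. solves_edges E x lam g e \<and> eigfun_stD E x Vs B lam (\<lambda>n t. edge_sign V1 n * e n t)"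
proof -
  obtain e where se: "solves_edges E x lam g e" and on_B: "\<forall>v\<in>B. \<forall>j\<in>v. endder e x j = 0"
    and ast: "\<forall>v\<in>Vs - B. antistandard_cond v (endval g x) (endder e x)"
    using ef unfolding eigfun_astN_def by blast
  let ?F = "\<lambda>n t. edge_sign V1 n * e n t"
  let ?D = "\<lambda>n t. edge_sign V1 n * (- lam * g n t)"
  have der: "endder ?D x j = ((if v \<in> V1 then 1 else -1) * - lam) * endval g x j"
    if "v \<in> Vs" "j \<in> v" for v j
    using endder_sign_twist[OF that, of "\<lambda>n t. - lam * g n t"] unfolding endval_def by simp
  have "eigfun_stD E x Vs B lam ?F"
    unfolding eigfun_stD_def
  proof (intro exI[of _ ?D] conjI ballI)
    show "solves_edges E x lam ?F ?D"
      by (rule solves_edges_edge_scale[OF solves_edges_derivative[OF se]])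
    fix v j assume "v \<in> B" "j \<in> v"
    then show "endval ?F x j = 0" using endval_sign_twist[of v j] on_B BV by auto
  next
    fix v assume v: "v \<in> Vs - B"
    then have "standard_cond v (\<lambda>j. (if v \<in> V1 then 1 else -1) * endder e x j)
        (\<lambda>j. ((if v \<in> V1 then 1 else -1) * - lam) * endval g x j)"
      using ast by (intro standard_cond_of_antistandard) blast
    then show "standard_cond v (endval ?F x) (endder ?D x)"
      using v endval_sign_twist der by (subst standard_cond_cong[of v]) auto
  qed
  with se show ?thesis by (intro exI[of _ e] conjI)
qed

lemma multiplicity_astN_eq_stD:
  assumes BV: "B \<subseteq> Vs" and lam: "lam \<noteq> 0"
  shows "multiplicity E x (eigfun_astN E x Vs B) lam = multiplicity E x (eigfun_stD E x Vs B) lam"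
proof (rule multiplicity_eqI)
  fix m phi
  assume "\<forall>i<m. eigfun_astN E x Vs B lam (phi i)" "lin_indep E x m phi"
  from eigenfamily_transfer[where s = "edge_sign V1" and P = "eigfun_astN E x Vs B"
      and Q = "eigfun_stD E x Vs B", OF lam edge_sign_nonzero astN_sign_twist[OF BV] this]
  show "\<exists>psi. (\<forall>i<m. eigfun_stD E x Vs B lam (psi i)) \<and> lin_indep E x m psi" .
next
  fix m psi
  assume "\<forall>i<m. eigfun_stD E x Vs B lam (psi i)" "lin_indep E x m psi"
  from eigenfamily_transfer[where s = "edge_sign V1" and P = "eigfun_stD E x Vs B"
      and Q = "eigfun_astN E x Vs B", OF lam edge_sign_nonzero stD_sign_twist[OF BV] this]
  show "\<exists>phi. (\<forall>i<m. eigfun_astN E x Vs B lam (phi i)) \<and> lin_indep E x m phi" .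
qed

end

section \<open>The kernel of the anti-standard operator\<close>

text \<open>Edgewise constant functions are identified with their vectors of edge values, functions
  \<open>nat \<Rightarrow> real\<close> vanishing from \<open>E\<close> on.\<close>

interpretation fvec: vector_space "\<lambda>(c::real) (a::nat \<Rightarrow> real) n. c * a n"
  by unfold_locales (auto simp: algebra_simps fun_eq_iff)

definition edge_vectors :: "nat \<Rightarrow> (nat \<Rightarrow> real) set" where
  "edge_vectors E = {a. \<forall>n\<ge>E. a n = 0}"

definition edge_unit :: "nat \<Rightarrow> nat \<Rightarrow> real" where
  "edge_unit n = (\<lambda>k. if k = n then 1 else 0)"

definition lin_indep_vec :: "nat \<Rightarrow> nat \<Rightarrow> (nat \<Rightarrow> nat \<Rightarrow> real) \<Rightarrow> bool" where
  "lin_indep_vec E m a \<longleftrightarrow> (\<forall>c. (\<forall>n<E. (\<Sum>i<m. c i * a i n) = 0) \<longrightarrow> (\<forall>i<m. c i = 0))"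

lemma edge_vectors_subset_span: "edge_vectors E \<subseteq> fvec.span (edge_unit ` {..<E})"
proof
  fix a assume a: "a \<in> edge_vectors E"
  have "a = (\<Sum>n<E. (\<lambda>k. a n * edge_unit n k))"
  proof
    fix k
    have "(\<Sum>n<E. a n * edge_unit n k) = (\<Sum>n<E. if k = n then a n else 0)"
      unfolding edge_unit_def by (intro sum.cong) auto
    then show "a k = (\<Sum>n<E. (\<lambda>k. a n * edge_unit n k)) k"
      using a unfolding sum_apply edge_vectors_def by (simp add: not_less)
  qed
  also have "\<dots> \<in> fvec.span (edge_unit ` {..<E})"
    by (intro fvec.span_sum fvec.span_scale fvec.span_base) auto
  finally show "a \<in> fvec.span (edge_unit ` {..<E})" .
qed

lemma inj_edge_unit: "inj edge_unit"
  by (rule injI) (metis edge_unit_def zero_neq_one)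

lemma independent_edge_units: "fvec.independent (edge_unit ` {..<E})"
proof (rule fvec.independent_if_scalars_zero)
  fix f y assume sum0: "(\<Sum>x\<in>edge_unit ` {..<E}. (\<lambda>n. f x * x n)) = 0" and y: "y \<in> edge_unit ` {..<E}"
  then obtain k where k: "k < E" "y = edge_unit k" by blast
  have "(\<Sum>x\<in>edge_unit ` {..<E}. f x * x k) = (\<Sum>n<E. f (edge_unit n) * edge_unit n k)"
    by (simp add: sum.reindex inj_on_subset[OF inj_edge_unit])
  also have "\<dots> = f (edge_unit k)"
    using k(1) unfolding edge_unit_def by (simp add: if_distrib cong: if_cong)
  finally show "f y = 0"
    using fun_cong[OF sum0, of k] k(2) unfolding sum_apply by simp
qed simp

lemma card_edge_units: "card (edge_unit ` {..<E}) = E"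
  by (simp add: card_image inj_on_subset[OF inj_edge_unit])

lemma lincomb_eq_0_iff:
  assumes "\<forall>i<m. a i \<in> edge_vectors E"
  shows "(\<forall>n<E. (\<Sum>i<m. c i * a i n) = 0) \<longleftrightarrow> (\<Sum>i<m. (\<lambda>n. c i * a i n)) = 0"
proof -
  have "(\<Sum>i<m. c i * a i n) = 0" if "E \<le> n" for n
    using assms that unfolding edge_vectors_def by simp
  then have "(\<forall>n<E. (\<Sum>i<m. c i * a i n) = 0) \<longleftrightarrow> (\<forall>n. (\<Sum>i<m. c i * a i n) = 0)"
    by (metis not_less)
  then show ?thesis unfolding fun_eq_iff sum_apply by simp
qed

lemma lin_indep_vec_inj_on:
  assumes W: "\<forall>i<m. a i \<in> edge_vectors E" and li: "lin_indep_vec E m a"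
  shows "inj_on a {..<m}"
proof (rule inj_onI, rule ccontr)
  fix i j assume ij: "i \<in> {..<m}" "j \<in> {..<m}" "a i = a j" "i \<noteq> j"
  define c where "c k = (if k = i then 1 else if k = j then -1 else 0 :: real)" for k
  have "(\<Sum>k<m. c k * a k n) = 0" for n
  proof -
    have "(\<Sum>k<m. c k * a k n) = (\<Sum>k<m. (if k = i then a i n else 0) - (if k = j then a j n else 0))"
      using ij(4) unfolding c_def by (intro sum.cong) auto
    also have "\<dots> = 0" using ij by (simp add: sum_subtractf)
    finally show ?thesis .
  qed
  then have "c i = 0" using li ij(1) unfolding lin_indep_vec_def by blast
  then show False unfolding c_def by simp
qed

lemma lin_indep_vec_iff:
  assumes W: "\<forall>i<m. a i \<in> edge_vectors E"
  shows "lin_indep_vec E m a \<longleftrightarrow> inj_on a {..<m} \<and> fvec.independent (a ` {..<m})"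
proof
  assume li: "lin_indep_vec E m a"
  then have inj: "inj_on a {..<m}" by (rule lin_indep_vec_inj_on[OF W])
  have "fvec.independent (a ` {..<m})"
  proof (rule fvec.independent_if_scalars_zero)
    fix f y assume "(\<Sum>x\<in>a ` {..<m}. (\<lambda>n. f x * x n)) = 0" and y: "y \<in> a ` {..<m}"
    then have "(\<Sum>i<m. (\<lambda>n. f (a i) * a i n)) = 0" by (simp add: sum.reindex[OF inj])
    then have "(\<Sum>i<m. f (a i) * a i n) = 0" if "n < E" for n
      using lincomb_eq_0_iff[OF W, of "\<lambda>i. f (a i)"] that by blast
    from li[unfolded lin_indep_vec_def, rule_format, OF this] show "f y = 0" using y by auto
  qed simp
  with inj show "inj_on a {..<m} \<and> fvec.independent (a ` {..<m})" ..
next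
  assume "inj_on a {..<m} \<and> fvec.independent (a ` {..<m})"
  then have inj: "inj_on a {..<m}" and ind: "fvec.independent (a ` {..<m})" by auto
  show "lin_indep_vec E m a"
    unfolding lin_indep_vec_def
  proof (rule allI, rule impI)
    fix c assume "\<forall>n<E. (\<Sum>i<m. c i * a i n) = 0"
    then have sum0: "(\<Sum>i<m. (\<lambda>n. c i * a i n)) = 0" using lincomb_eq_0_iff[OF W, of c] by blast
    define u where "u y = c (the_inv_into {..<m} a y)" for y
    have u: "u (a i) = c i" if "i < m" for i
      unfolding u_def using the_inv_into_f_f[OF inj] that by simp
    have "(\<Sum>y\<in>a ` {..<m}. (\<lambda>n. u y * y n)) = 0"
      using sum0 by (simp add: sum.reindex[OF inj] u)
    then have "\<forall>y\<in>a ` {..<m}. u y = 0"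
      using ind fvec.dependent_finite[of "a ` {..<m}"] by blast
    then show "\<forall>i<m. c i = 0" using u by auto
  qed
qed

lemma Sup_lin_indep_vec_eq_dim:
  assumes "S \<subseteq> edge_vectors E"
  shows "Sup {m. \<exists>a. (\<forall>i<m. a i \<in> S) \<and> lin_indep_vec E m a} = fvec.dim S"
proof -
  obtain Bs where Bs: "Bs \<subseteq> S" "fvec.independent Bs" "S \<subseteq> fvec.span Bs" "card Bs = fvec.dim S"
    by (rule fvec.basis_exists)
  have "finite Bs"
    using fvec.independent_span_bound[OF _ Bs(2)] Bs(1) assms edge_vectors_subset_span by blast
  then obtain g where g: "bij_betw g {..<card Bs} Bs"
    using ex_bij_betw_nat_finite lessThan_atLeast0 by metis
  have "card Bs \<in> {m. \<exists>a. (\<forall>i<m. a i \<in> S) \<and> lin_indep_vec E m a}"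
  proof -
    have "\<forall>i<card Bs. g i \<in> S" using g Bs(1) by (auto dest: bij_betwE)
    moreover have "lin_indep_vec E (card Bs) g"
      using g Bs(2) calculation assms by (subst lin_indep_vec_iff) (auto simp: bij_betw_def)
    ultimately show ?thesis by blast
  qed
  moreover have "m \<le> card Bs" if m: "m \<in> {m. \<exists>a. (\<forall>i<m. a i \<in> S) \<and> lin_indep_vec E m a}" for m
  proof -
    obtain a where a: "\<forall>i<m. a i \<in> S" "lin_indep_vec E m a" using m by blast
    then have "inj_on a {..<m}" "fvec.independent (a ` {..<m})"
      using lin_indep_vec_iff[of m a E] assms by auto
    moreover have "a ` {..<m} \<subseteq> fvec.span Bs" using a(1) Bs(3) by auto
    ultimately show "m \<le> card Bs"
      using fvec.independent_span_bound[OF \<open>finite Bs\<close>] card_image by fastforce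
  qed
  ultimately show ?thesis using Bs(4) by (intro cSup_eq_maximum) auto
qed

definition vertex_sum :: "(nat \<Rightarrow> real) \<Rightarrow> nat set \<Rightarrow> real" where
  "vertex_sum a v = (\<Sum>j\<in>v. a (j div 2))"

definition zero_modes :: "nat \<Rightarrow> nat set set \<Rightarrow> nat set set \<Rightarrow> (nat \<Rightarrow> real) set" where
  "zero_modes E Vs B = {a \<in> edge_vectors E. \<forall>v\<in>Vs - B. vertex_sum a v = 0}"

definition dual_vectors ::
  "nat \<Rightarrow> nat set set \<Rightarrow> nat set set \<Rightarrow> (nat set \<Rightarrow> nat \<Rightarrow> real) \<Rightarrow> bool" where
  "dual_vectors E Vs B s \<longleftrightarrow> (\<forall>v\<in>Vs - B. s v \<in> edge_vectors E \<and>
      (\<forall>u\<in>Vs - B. vertex_sum (s v) u = (if u = v then 1 else 0)))"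

lemma dual_vectors_in_edge_vectors: "dual_vectors E Vs B s \<Longrightarrow> v \<in> Vs - B \<Longrightarrow> s v \<in> edge_vectors E"
  unfolding dual_vectors_def by simp

lemma dual_vectors_vertex_sum:
  "dual_vectors E Vs B s \<Longrightarrow> v \<in> Vs - B \<Longrightarrow> u \<in> Vs - B \<Longrightarrow>
    vertex_sum (s v) u = (if u = v then 1 else 0)"
  unfolding dual_vectors_def by simp

lemma vertex_sum_lincomb:
  "vertex_sum (\<lambda>n. \<Sum>i\<in>I. c i * b i n) u = (\<Sum>i\<in>I. c i * vertex_sum (b i) u)"
  unfolding vertex_sum_def sum_distrib_left by (rule sum.swap)

lemma vertex_sum_add: "vertex_sum (\<lambda>n. a n + b n) u = vertex_sum a u + vertex_sum b u"
  unfolding vertex_sum_def by (rule sum.distrib)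

lemma vertex_sum_diff: "vertex_sum (\<lambda>n. a n - b n) u = vertex_sum a u - vertex_sum b u"
  unfolding vertex_sum_def by (rule sum_subtractf)

lemma vertex_sum_scale: "vertex_sum (\<lambda>n. c * a n) u = c * vertex_sum a u"
  unfolding vertex_sum_def by (rule sum_distrib_left[symmetric])

lemma zero_mode_astN_kernel:
  assumes "a \<in> zero_modes E Vs B"
  shows "eigfun_astN E x Vs B 0 (\<lambda>n t. a n)"
  unfolding eigfun_astN_def
proof (intro exI[of _ "\<lambda>n t. 0"] conjI ballI)
  show "solves_edges E x 0 (\<lambda>n t. a n) (\<lambda>n t. 0)" unfolding solves_edges_iff by simp
  show "endder (\<lambda>n t. 0) x j = 0" for j unfolding endder_def by simp
  fix v assume "v \<in> Vs - B"
  then have "(\<Sum>j\<in>v. endval (\<lambda>n t. a n) x j) = 0"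
    using assms unfolding zero_modes_def vertex_sum_def endval_def by blast
  then show "antistandard_cond v (endval (\<lambda>n t. a n) x) (endder (\<lambda>n t. 0) x)"
    unfolding antistandard_cond_def endder_def by simp
qed

context compact_metric_graph
begin

lemma vertex_sum_edge_unit:
  assumes "v \<in> Vs"
  shows "vertex_sum (edge_unit n) v = (if 2*n \<in> v then 1 else 0) + (if 2*n+1 \<in> v then 1 else 0)"
proof -
  have "vertex_sum (edge_unit n) v
      = (\<Sum>j\<in>v. (if j = 2*n then 1 else 0) + (if j = 2*n+1 then 1 else 0))"
  proof -
    have "j div 2 = n \<longleftrightarrow> j = 2*n \<or> j = 2*n+1" for j by presburger
    then show ?thesis unfolding vertex_sum_def edge_unit_def by (intro sum.cong) auto
  qed
  then show ?thesis using finite_vertex[OF assms] by (simp add: sum.distrib)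
qed

lemma edge_unit_between:
  assumes "(w, z) \<in> edge_rel E Vs" "w \<noteq> z"
  shows "\<exists>n<E. vertex_sum (edge_unit n) w = 1 \<and>
           (\<forall>u\<in>Vs. u \<noteq> w \<longrightarrow> u \<noteq> z \<longrightarrow> vertex_sum (edge_unit n) u = 0)"
proof -
  from assms(1) obtain n where w: "w \<in> Vs" and z: "z \<in> Vs" and n: "n < E"
    and e: "(2*n \<in> w \<and> 2*n+1 \<in> z) \<or> (2*n+1 \<in> w \<and> 2*n \<in> z)"
    unfolding edge_rel_def by blast
  have ends: "2*n \<in> w \<union> z" "2*n+1 \<in> w \<union> z" using e by auto
  have "j \<notin> z" if "j \<in> w" for j using vertex_eqI[OF w z that] assms(2) by blast
  then have "(2*n \<in> w \<and> 2*n+1 \<notin> w) \<or> (2*n+1 \<in> w \<and> 2*n \<notin> w)" using e by blast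
  then have "vertex_sum (edge_unit n) w = 1"
    using vertex_sum_edge_unit[OF w] by auto
  moreover have "vertex_sum (edge_unit n) u = 0" if u: "u \<in> Vs" "u \<noteq> w" "u \<noteq> z" for u
  proof -
    have "j \<notin> u" if "j \<in> w \<union> z" for j
      using that vertex_eqI[OF u(1) w, of j] vertex_eqI[OF u(1) z, of j] u(2,3) by blast
    then show ?thesis using vertex_sum_edge_unit[OF u(1)] ends by simp
  qed
  ultimately show ?thesis using n by blast
qed

text \<open>Walking from \<open>v\<close> towards \<open>b\<close>, each edge unit moves the unit vertex sum one step
  along the path.\<close>

lemma vertex_sum_path_vector:
  assumes "(v, b) \<in> (edge_rel E Vs)\<^sup>*"
  shows "\<exists>a\<in>edge_vectors E. \<forall>u\<in>Vs. u \<noteq> b \<longrightarrow> vertex_sum a u = (if u = v then 1 else 0)"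
  using assms
proof (induction rule: rtrancl_induct)
  case base
  show ?case by (intro bexI[of _ "\<lambda>_. 0"]) (auto simp: vertex_sum_def edge_vectors_def)
next
  case (step w z)
  then obtain a where a: "a \<in> edge_vectors E"
    and a_sums: "\<forall>u\<in>Vs. u \<noteq> w \<longrightarrow> vertex_sum a u = (if u = v then 1 else 0)" by blast
  show ?case
  proof (cases "w = z")
    case True
    then show ?thesis using a a_sums by blast
  next
    case False
    from edge_unit_between[OF step.hyps(2) False] obtain n where n: "n < E"
      and unit_w: "vertex_sum (edge_unit n) w = 1"
      and unit_u: "\<forall>u\<in>Vs. u \<noteq> w \<longrightarrow> u \<noteq> z \<longrightarrow> vertex_sum (edge_unit n) u = 0"
      by blast
    define c where "c = (if w = v then 1 else 0) - vertex_sum a w"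
    define a' where "a' = (\<lambda>k. a k + c * edge_unit n k)"
    have "a' \<in> edge_vectors E" using a n unfolding a'_def edge_vectors_def edge_unit_def by auto
    moreover have "vertex_sum a' u = (if u = v then 1 else 0)" if u: "u \<in> Vs" "u \<noteq> z" for u
    proof -
      have sum_a': "vertex_sum a' u = vertex_sum a u + c * vertex_sum (edge_unit n) u"
        unfolding a'_def vertex_sum_add vertex_sum_scale ..
      show ?thesis
      proof (cases "u = w")
        case True
        then show ?thesis using sum_a' unit_w unfolding c_def by simp
      next
        case False
        then show ?thesis using sum_a' unit_u a_sums u by simp
      qed
    qed
    ultimately show ?thesis by blast
  qed
qed

lemma dual_vectors_exist:
  assumes conn: "graph_connected E Vs" and BV: "B \<subseteq> Vs" and "B \<noteq> {}"
  shows "\<exists>s. dual_vectors E Vs B s"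
proof -
  obtain b where b: "b \<in> B" using \<open>B \<noteq> {}\<close> by blast
  have "\<exists>a. a \<in> edge_vectors E \<and> (\<forall>u\<in>Vs - B. vertex_sum a u = (if u = v then 1 else 0))"
    if v: "v \<in> Vs - B" for v
  proof -
    have "(v, b) \<in> (edge_rel E Vs)\<^sup>*" using conn v b BV unfolding graph_connected_def by blast
    from vertex_sum_path_vector[OF this] obtain a where a: "a \<in> edge_vectors E"
      and sums: "\<forall>u\<in>Vs. u \<noteq> b \<longrightarrow> vertex_sum a u = (if u = v then 1 else 0)" by blast
    have "vertex_sum a u = (if u = v then 1 else 0)" if "u \<in> Vs - B" for u
    proof -
      have "u \<in> Vs" "u \<noteq> b" using that b by auto
      then show ?thesis using sums by simp
    qed
    with a show ?thesis by blast
  qed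
  then have "\<forall>v\<in>Vs - B. \<exists>a. a \<in> edge_vectors E \<and>
      (\<forall>u\<in>Vs - B. vertex_sum a u = (if u = v then 1 else 0))" by (rule ballI)
  from bchoice[OF this] show ?thesis unfolding dual_vectors_def .
qed

lemma dual_projection_zero_mode:
  assumes dual: "dual_vectors E Vs B s" and a: "a \<in> edge_vectors E"
  shows "(\<lambda>k. a k - (\<Sum>v\<in>Vs - B. vertex_sum a v * s v k)) \<in> zero_modes E Vs B"
  unfolding zero_modes_def
proof (intro CollectI conjI ballI)
  show "(\<lambda>k. a k - (\<Sum>v\<in>Vs - B. vertex_sum a v * s v k)) \<in> edge_vectors E"
    using a dual_vectors_in_edge_vectors[OF dual] unfolding edge_vectors_def by simp
  fix u assume u: "u \<in> Vs - B"
  have "(\<Sum>v\<in>Vs - B. vertex_sum a v * vertex_sum (s v) u)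
      = (\<Sum>v\<in>Vs - B. if v = u then vertex_sum a u else 0)"
    using dual_vectors_vertex_sum[OF dual _ u] by (intro sum.cong) auto
  also have "\<dots> = vertex_sum a u" using u finite_vertices by simp
  finally show "vertex_sum (\<lambda>k. a k - (\<Sum>v\<in>Vs - B. vertex_sum a v * s v k)) u = 0"
    unfolding vertex_sum_diff vertex_sum_lincomb by simp
qed

lemma dual_vectors_inj_on:
  assumes dual: "dual_vectors E Vs B s"
  shows "inj_on s (Vs - B)"
proof (rule inj_onI)
  fix v w assume v: "v \<in> Vs - B" and w: "w \<in> Vs - B" and "s v = s w"
  have "vertex_sum (s v) v = 1" using dual_vectors_vertex_sum[OF dual v v] by simp
  then have "vertex_sum (s w) v = 1" using \<open>s v = s w\<close> by simp
  moreover have "vertex_sum (s w) v = (if v = w then 1 else 0)" by (rule dual_vectors_vertex_sum[OF dual w v])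
  ultimately show "v = w" by (simp split: if_splits)
qed

lemma zero_modes_Int_dual_vectors:
  assumes dual: "dual_vectors E Vs B s" and "A \<subseteq> zero_modes E Vs B"
  shows "A \<inter> s ` (Vs - B) = {}"
proof (rule ccontr)
  assume "A \<inter> s ` (Vs - B) \<noteq> {}"
  then obtain v where v: "v \<in> Vs - B" "s v \<in> A" by blast
  then have "vertex_sum (s v) v = 0" using assms(2) unfolding zero_modes_def by blast
  moreover have "vertex_sum (s v) v = 1" using dual_vectors_vertex_sum[OF dual v(1) v(1)] by simp
  ultimately show False by simp
qed

lemma independent_zero_modes_Un_dual_vectors:
  assumes dual: "dual_vectors E Vs B s"
    and A: "A \<subseteq> zero_modes E Vs B" "finite A" "fvec.independent A"
  shows "fvec.independent (A \<union> s ` (Vs - B))"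
proof (rule fvec.independent_if_scalars_zero)
  let ?S = "s ` (Vs - B)"
  have fin: "finite (Vs - B)" using finite_vertices by simp
  then show "finite (A \<union> ?S)" using A(2) by simp
  fix f y assume sum0: "(\<Sum>x\<in>A \<union> ?S. (\<lambda>n. f x * x n)) = 0" and y: "y \<in> A \<union> ?S"
  have pointwise: "(\<Sum>x\<in>A. f x * x n) + (\<Sum>x\<in>?S. f x * x n) = 0" for n
    using fun_cong[OF sum0, of n] A(2) fin zero_modes_Int_dual_vectors[OF dual A(1)]
    unfolding sum_apply by (simp add: sum.union_disjoint)
  have dual_coeffs: "f (s u) = 0" if u: "u \<in> Vs - B" for u
  proof -
    have "vertex_sum (\<lambda>n. (\<Sum>x\<in>A. f x * x n) + (\<Sum>x\<in>?S. f x * x n)) u = 0"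
      unfolding pointwise by (simp add: vertex_sum_def)
    moreover have "vertex_sum x u = 0" if "x \<in> A" for x
      using that A(1) u unfolding zero_modes_def by blast
    ultimately have "(\<Sum>x\<in>?S. f x * vertex_sum x u) = 0"
      unfolding vertex_sum_add vertex_sum_lincomb by simp
    also have "(\<Sum>x\<in>?S. f x * vertex_sum x u) = (\<Sum>v\<in>Vs - B. f (s v) * vertex_sum (s v) u)"
      by (rule sum.reindex[OF dual_vectors_inj_on[OF dual], unfolded comp_def])
    also have "\<dots> = (\<Sum>v\<in>Vs - B. if v = u then f (s u) else 0)"
      using dual_vectors_vertex_sum[OF dual _ u] by (intro sum.cong) auto
    also have "\<dots> = f (s u)" using u fin by simp
    finally show ?thesis by simp
  qed
  have "(\<Sum>x\<in>A. (\<lambda>n. f x * x n)) = 0"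
  proof
    fix n
    have "(\<Sum>x\<in>?S. f x * x n) = 0" using dual_coeffs by (intro sum.neutral) auto
    then show "(\<Sum>x\<in>A. (\<lambda>n. f x * x n)) n = 0 n" using pointwise[of n] unfolding sum_apply by simp
  qed
  then have "\<forall>x\<in>A. f x = 0" using A(2,3) fvec.dependent_finite by blast
  then show "f y = 0" using y dual_coeffs by blast
qed

lemma edge_vectors_subset_span_dual_vectors:
  assumes dual: "dual_vectors E Vs B s" and K: "zero_modes E Vs B \<subseteq> fvec.span Bk"
  shows "edge_vectors E \<subseteq> fvec.span (Bk \<union> s ` (Vs - B))"
proof
  fix e assume e: "e \<in> edge_vectors E"
  let ?k = "\<lambda>k. e k - (\<Sum>v\<in>Vs - B. vertex_sum e v * s v k)"
  let ?l = "\<Sum>v\<in>Vs - B. (\<lambda>k. vertex_sum e v * s v k)"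
  have "?k \<in> fvec.span (Bk \<union> s ` (Vs - B))"
    using dual_projection_zero_mode[OF dual e] K fvec.span_mono[of Bk] by blast
  moreover have "?l \<in> fvec.span (Bk \<union> s ` (Vs - B))"
    by (intro fvec.span_sum fvec.span_scale fvec.span_base) auto
  ultimately have "?k + ?l \<in> fvec.span (Bk \<union> s ` (Vs - B))" by (rule fvec.span_add)
  moreover have "?k + ?l = e" by (simp add: fun_eq_iff sum_apply)
  ultimately show "e \<in> fvec.span (Bk \<union> s ` (Vs - B))" by simp
qed

lemma dim_zero_modes:
  assumes "graph_connected E Vs" "B \<subseteq> Vs" "B \<noteq> {}"
  shows "fvec.dim (zero_modes E Vs B) + card (Vs - B) = E"
proof -
  from dual_vectors_exist[OF assms] obtain s where dual: "dual_vectors E Vs B s" ..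
  obtain Bk where Bk: "Bk \<subseteq> zero_modes E Vs B" "fvec.independent Bk"
    "zero_modes E Vs B \<subseteq> fvec.span Bk" "card Bk = fvec.dim (zero_modes E Vs B)"
    by (rule fvec.basis_exists)
  have K_sub: "zero_modes E Vs B \<subseteq> edge_vectors E" unfolding zero_modes_def by blast
  have "finite Bk"
    using fvec.independent_span_bound[OF _ Bk(2)] Bk(1) K_sub edge_vectors_subset_span by blast
  let ?BS = "Bk \<union> s ` (Vs - B)"
  have card_BS: "card ?BS = card Bk + card (Vs - B)"
    using \<open>finite Bk\<close> finite_vertices zero_modes_Int_dual_vectors[OF dual Bk(1)]
      dual_vectors_inj_on[OF dual] by (simp add: card_Un_disjoint card_image)
  have "s ` (Vs - B) \<subseteq> edge_vectors E" using dual_vectors_in_edge_vectors[OF dual] by blast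
  then have "?BS \<subseteq> fvec.span (edge_unit ` {..<E})"
    using Bk(1) K_sub edge_vectors_subset_span by blast
  then have "card ?BS \<le> card (edge_unit ` {..<E})"
    using fvec.independent_span_bound[OF _ independent_zero_modes_Un_dual_vectors[OF dual Bk(1) \<open>finite Bk\<close> Bk(2)]]
    by simp
  moreover have "card (edge_unit ` {..<E}) \<le> card ?BS"
  proof -
    have "edge_unit ` {..<E} \<subseteq> fvec.span ?BS"
      using edge_vectors_subset_span_dual_vectors[OF dual Bk(3)]
      unfolding edge_vectors_def edge_unit_def by auto
    moreover have "finite ?BS" using \<open>finite Bk\<close> finite_vertices by simp
    ultimately show ?thesis using fvec.independent_span_bound[OF _ independent_edge_units] by simp
  qed
  ultimately show ?thesis unfolding card_BS card_edge_units Bk(4) by simp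
qed

lemma astN_kernel_edgewise_constant:
  assumes "eigfun_astN E x Vs B 0 f" "n < E" "t \<in> edge x n"
  shows "f n t = f n (x (2*n))"
proof -
  obtain d where se: "solves_edges E x 0 f d" and on_B: "\<forall>v\<in>B. \<forall>j\<in>v. endder d x j = 0"
    and ast: "\<forall>v\<in>Vs - B. antistandard_cond v (endval f x) (endder d x)"
    using assms(1) unfolding eigfun_astN_def by blast
  have "boundary_term E x f d = 0" by (rule boundary_term_eq_0_if_astN[OF on_B ast])
  then have "\<forall>s\<in>edge x n. d n s = 0" using boundary_term_eq_0_imp_vanishing(1)[OF se _ _ assms(2)] by simp
  then show ?thesis using constant_on_edge_if_derivative_vanishes[OF se assms(2) _ assms(3)] by simp
qed

lemma astN_kernel_zero_mode:
  assumes ef: "eigfun_astN E x Vs B 0 f"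
  shows "(\<lambda>n. if n < E then f n (x (2*n)) else 0) \<in> zero_modes E Vs B"
  unfolding zero_modes_def
proof (intro CollectI conjI ballI)
  show "(\<lambda>n. if n < E then f n (x (2*n)) else 0) \<in> edge_vectors E"
    unfolding edge_vectors_def by simp
  fix v assume v: "v \<in> Vs - B"
  have "vertex_sum (\<lambda>n. if n < E then f n (x (2*n)) else 0) v = (\<Sum>j\<in>v. endval f x j)"
    unfolding vertex_sum_def endval_def
  proof (rule sum.cong[OF refl])
    fix j assume "j \<in> v"
    then have j: "j < 2*E" using endpoint_less v by blast
    then show "(if j div 2 < E then f (j div 2) (x (2 * (j div 2))) else 0) = f (j div 2) (x j)"
      using astN_kernel_edgewise_constant[OF ef _ endpoint_in_edge[OF j]] by simp
  qed
  also have "\<dots> = 0" using ef v unfolding eigfun_astN_def antistandard_cond_def by blast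
  finally show "vertex_sum (\<lambda>n. if n < E then f n (x (2*n)) else 0) v = 0" .
qed

lemma lin_indep_edgewise_constant:
  assumes "\<And>i n t. i < m \<Longrightarrow> n < E \<Longrightarrow> t \<in> edge x n \<Longrightarrow> phi i n t = a i n"
  shows "lin_indep E x m phi \<longleftrightarrow> lin_indep_vec E m a"
proof -
  have left_end: "x (2*n) \<in> edge x n" if "n < E" for n
    using endpoint_in_edge[of "2*n"] that by simp
  have eq: "(\<Sum>i<m. c i * phi i n t) = (\<Sum>i<m. c i * a i n)" if "n < E" "t \<in> edge x n" for c n t
    using assms that by (intro sum.cong) auto
  have "(\<forall>n<E. \<forall>t\<in>edge x n. (\<Sum>i<m. c i * phi i n t) = 0) \<longleftrightarrow>
      (\<forall>n<E. (\<Sum>i<m. c i * a i n) = 0)" for c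
  proof
    assume "\<forall>n<E. \<forall>t\<in>edge x n. (\<Sum>i<m. c i * phi i n t) = 0"
    then show "\<forall>n<E. (\<Sum>i<m. c i * a i n) = 0" using eq left_end by metis
  qed (use eq in simp)
  then show ?thesis unfolding lin_indep_def lin_indep_vec_def by simp
qed

lemma astN_kernel_families:
  "(\<exists>phi. (\<forall>i<m. eigfun_astN E x Vs B 0 (phi i)) \<and> lin_indep E x m phi) \<longleftrightarrow>
   (\<exists>a. (\<forall>i<m. a i \<in> zero_modes E Vs B) \<and> lin_indep_vec E m a)"
proof
  assume "\<exists>phi. (\<forall>i<m. eigfun_astN E x Vs B 0 (phi i)) \<and> lin_indep E x m phi"
  then obtain phi where ef: "\<forall>i<m. eigfun_astN E x Vs B 0 (phi i)" and li: "lin_indep E x m phi"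
    by blast
  define a where "a i = (\<lambda>n. if n < E then phi i n (x (2*n)) else 0)" for i
  have "lin_indep_vec E m a"
    using li astN_kernel_edgewise_constant ef unfolding a_def
    by (subst lin_indep_edgewise_constant[symmetric]) auto
  moreover have "\<forall>i<m. a i \<in> zero_modes E Vs B"
    using ef astN_kernel_zero_mode unfolding a_def by blast
  ultimately show "\<exists>a. (\<forall>i<m. a i \<in> zero_modes E Vs B) \<and> lin_indep_vec E m a" by blast
next
  assume "\<exists>a. (\<forall>i<m. a i \<in> zero_modes E Vs B) \<and> lin_indep_vec E m a"
  then obtain a where K: "\<forall>i<m. a i \<in> zero_modes E Vs B" and li: "lin_indep_vec E m a" by blast
  have "lin_indep E x m (\<lambda>i n t. a i n)"
    using li by (subst lin_indep_edgewise_constant) auto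
  moreover have "\<forall>i<m. eigfun_astN E x Vs B 0 (\<lambda>n t. a i n)"
    using K zero_mode_astN_kernel by blast
  ultimately show "\<exists>phi. (\<forall>i<m. eigfun_astN E x Vs B 0 (phi i)) \<and> lin_indep E x m phi"
    by (intro exI[of _ "\<lambda>i n t. a i n"]) simp
qed

lemma multiplicity_astN_0:
  "multiplicity E x (eigfun_astN E x Vs B) 0 = fvec.dim (zero_modes E Vs B)"
  unfolding multiplicity_def astN_kernel_families
  using Sup_lin_indep_vec_eq_dim[of "zero_modes E Vs B" E] by (simp add: zero_modes_def)

end

theorem mainTheorem9:
  fixes E :: nat and x :: "nat \<Rightarrow> real" and Vs B :: "nat set set"
  assumes "metric_graph E x Vs"
    and "graph_connected E Vs"
    and "bipartite E Vs"
    and "B \<subseteq> boundary Vs"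
    and "B \<noteq> {}"
  shows "\<forall>k\<ge>1. eigenvalue E x (eigfun_astN E x Vs B)
                   (nat (int k + betti E Vs + int (card B) - 1))
             = eigenvalue E x (eigfun_stD E x Vs B) k"
proof -
  interpret compact_metric_graph E x Vs by (rule compact_metric_graph.intro) fact
  from assms(3) obtain V1 where V1: "V1 \<subseteq> Vs \<and>
      (\<forall>n<E. \<forall>v\<in>Vs. \<forall>w\<in>Vs. 2*n \<in> v \<longrightarrow> 2*n+1 \<in> w \<longrightarrow> (v \<in> V1 \<longleftrightarrow> w \<notin> V1))"
    unfolding bipartite_def by (rule exE)
  interpret bipartite_metric_graph E x Vs V1
    using V1 by unfold_locales (simp_all only:)
  have BV: "B \<subseteq> Vs" using assms(4) unfolding boundary_def by blast
  have kernel: "multiplicity E x (eigfun_astN E x Vs B) 0 + card (Vs - B) = E"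
    using dim_zero_modes[OF assms(2) BV assms(5)] multiplicity_astN_0 by simp
  have index: "nat (int k + betti E Vs + int (card B) - 1) = k + multiplicity E x (eigfun_astN E x Vs B) 0"
    for k
    using kernel card_Diff_subset[OF finite_subset[OF BV finite_vertices] BV]
      card_mono[OF finite_vertices BV] unfolding betti_def by simp
  show ?thesis
    unfolding index
  proof (intro allI impI eigenvalue_shift)
    show "multiplicity E x (eigfun_astN E x Vs B) lam = multiplicity E x (eigfun_stD E x Vs B) lam"
      if "lam \<noteq> 0" for lam
      using multiplicity_astN_eq_stD[OF BV that] .
    show "multiplicity E x (eigfun_stD E x Vs B) lam = 0" if "lam \<le> 0" for lam
      using stD_eigfun_nonpos_vanishes[OF assms(2) BV assms(5) _ that] by (intro multiplicity_eq_0I)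
    show "multiplicity E x (eigfun_astN E x Vs B) lam = 0" if "lam < 0" for lam
      using astN_eigfun_neg_vanishes[OF _ that] by (intro multiplicity_eq_0I)
  qed
qed

end
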